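(* Let $\mathcal X,\mathcal Y,\mathcal Z$ be discrete alphabets. Let $\{p_\theta\}_{\theta\in\Theta}$ be a nonempty family of probability distributions on $\mathcal X$, $\{P_\lambda(y|x)\}_{\lambda\in\Lambda}$ a nonempty family of transition probability matrices from $\mathcal X$ to $\mathcal Y$, and $\{Q_\mu(z|y)\}_{\mu\in M}$ a nonempty family of transition probability matrices from $\mathcal Y$ to $\mathcal Z$ (a nonlinear Markov chain $X\to Y\to Z$). Then $$\overline I(X;Z)\le\min\big(\overline I(X;Y),\overline I(Y;Z)\big).$$
   Context: For a distribution $p$ on an alphabet $\mathcal U$ and a transition matrix $W(v|u)$, let $I(p,W)=\sum_{u,v}p(u)W(v|u)\log\frac{W(v|u)}{\sum_{u'}p(u')W(v|u')}$ (classical mutual information, with $0\log(\cdot)=0$). Induced objects: the distribution of $Y$, $q_{\theta,\lambda}(y)=\sum_x p_\theta(x)P_\lambda(y|x)$, and the transition matrix of $Z$ given $X$, $R_{\lambda,\mu}(z|x)=\sum_y P_\lambda(y|x)Q_\mu(z|y)$. Nonlinear mutual information: $\overline I(X;Y)=\sup_{\theta,\lambda}I(p_\theta,P_\lambda)$, $\overline I(Y;Z)=\sup_{\theta,\lambda,\mu}I(q_{\theta,\lambda},Q_\mu)$, $\overline I(X;Z)=\sup_{\theta,\lambda,\mu}I(p_\theta,R_{\lambda,\mu})$. *)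

theory Defs
  imports "HOL-Analysis.Analysis"
begin

definition is_dist :: "('u::finite \<Rightarrow> real) \<Rightarrow> bool" where
  "is_dist p \<longleftrightarrow> (\<forall>u. 0 \<le> p u) \<and> (\<Sum>u\<in>UNIV. p u) = 1"

text \<open>A transition probability matrix; W u v stands for W(v|u).\<close>
definition is_channel :: "('u::finite \<Rightarrow> 'v::finite \<Rightarrow> real) \<Rightarrow> bool" where
  "is_channel W \<longleftrightarrow> (\<forall>u. is_dist (W u))"

definition out_dist :: "('u::finite \<Rightarrow> real) \<Rightarrow> ('u \<Rightarrow> 'v \<Rightarrow> real) \<Rightarrow> 'v \<Rightarrow> real" where
  "out_dist p W v = (\<Sum>u\<in>UNIV. p u * W u v)"

definition comp_channel :: "('x \<Rightarrow> 'y::finite \<Rightarrow> real) \<Rightarrow> ('y \<Rightarrow> 'z \<Rightarrow> real) \<Rightarrow> 'x \<Rightarrow> 'z \<Rightarrow> real" where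
  "comp_channel P Q x z = (\<Sum>y\<in>UNIV. P x y * Q y z)"

definition mutual_info :: "('u::finite \<Rightarrow> real) \<Rightarrow> ('u \<Rightarrow> 'v::finite \<Rightarrow> real) \<Rightarrow> real" where
  "mutual_info p W =
     (\<Sum>u\<in>UNIV. \<Sum>v\<in>UNIV.
        if p u * W u v = 0 then 0
        else p u * W u v * ln (W u v / out_dist p W v))"

end

theory Submission
  imports Defs
begin

(* Mutual information is a relative entropy: I(p, W) = D(p.W || p (x) pW), where p.W is the joint
   law of input and output.  Let L(x,y,z) = p(x) P(y|x) Q(z|y) be the law of the chain, q = pP
   and r = pPQ.  The (x,z)-marginal of L is the joint law of (X,Z), and both references
   L1 = p(x) q(y) Q(z|y) and L2 = p(x) P(y|x) r(z) have (x,z)-marginal p (x) r.  Relative entropy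
   can only decrease under marginalisation (log-sum inequality), so I(X;Z) <= D(L || Li).
   Since L / L1 depends only on (x,y) and L / L2 only on (y,z), marginalising onto these
   coordinates loses nothing: D(L || L1) = I(X;Y) and D(L || L2) = I(Y;Z). *)

(* Junk value: ln (a / 0) = 0, so the inequalities below assume a u > 0 ==> b u > 0. *)
definition rel_entropy :: "('a::finite \<Rightarrow> real) \<Rightarrow> ('a \<Rightarrow> real) \<Rightarrow> real" where
  "rel_entropy a b = (\<Sum>u\<in>UNIV. a u * ln (a u / b u))"

definition marginal :: "('a \<Rightarrow> 'b) \<Rightarrow> ('a::finite \<Rightarrow> real) \<Rightarrow> 'b \<Rightarrow> real" where
  "marginal f a v = (\<Sum>u | f u = v. a u)"

lemma sum_over_fibers:
  fixes f :: "'a::finite \<Rightarrow> 'b::finite" and h :: "'a \<Rightarrow> 'c::comm_monoid_add"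
  shows "(\<Sum>v\<in>UNIV. \<Sum>u | f u = v. h u) = (\<Sum>u\<in>UNIV. h u)"
  using sum.group[of UNIV UNIV f h] by simp

lemma marginal_bij_betw:
  assumes "bij_betw h UNIV {u. f u = v}"
  shows "marginal f a v = (\<Sum>w\<in>UNIV. a (h w))"
  unfolding marginal_def sum.reindex_bij_betw[OF assms] ..

lemma marginal_fst: "marginal fst a x = (\<Sum>y\<in>UNIV. a (x, y))"
  by (rule marginal_bij_betw) (auto simp: bij_betw_def inj_on_def image_def)

lemma marginal_forget_middle:
  "marginal (\<lambda>((x, y), z). (x, z)) a (x, z) = (\<Sum>y\<in>UNIV. a ((x, y), z))"
  by (rule marginal_bij_betw) (auto simp: bij_betw_def inj_on_def image_def)

lemma marginal_forget_first:
  "marginal (\<lambda>((x, y), z). (y, z)) a (y, z) = (\<Sum>x\<in>UNIV. a ((x, y), z))"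
  by (rule marginal_bij_betw) (auto simp: bij_betw_def inj_on_def image_def)

lemma mult_ln_div_lower_bound:
  fixes a b c :: real
  assumes "a > 0" "b > 0" "c > 0"
  shows "a * ln c + a - c * b \<le> a * ln (a / b)"
proof -
  have "ln (c * b / a) \<le> c * b / a - 1"
    using assms by (intro ln_le_minus_one) simp
  then have "a * ln (c * b / a) \<le> c * b - a"
    using assms by (simp add: field_simps mult_left_mono)
  moreover have "a * ln c = a * ln (a / b) + a * ln (c * b / a)"
    using assms by (simp add: ln_div ln_mult algebra_simps)
  ultimately show ?thesis by simp
qed

lemma log_sum_inequality:
  fixes a b :: "'i \<Rightarrow> real"
  assumes "finite S"
    and a_nonneg: "\<And>i. i \<in> S \<Longrightarrow> 0 \<le> a i" and b_nonneg: "\<And>i. i \<in> S \<Longrightarrow> 0 \<le> b i"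
    and abs_cont: "\<And>i. i \<in> S \<Longrightarrow> 0 < a i \<Longrightarrow> 0 < b i"
  shows "sum a S * ln (sum a S / sum b S) \<le> (\<Sum>i\<in>S. a i * ln (a i / b i))"
proof (cases "sum a S = 0")
  case True
  then have "a i = 0" if "i \<in> S" for i
    using sum_nonneg_eq_0_iff[OF \<open>finite S\<close>] a_nonneg that by blast
  then show ?thesis using True by simp
next
  case False
  define A B where "A = sum a S" and "B = sum b S"
  obtain j where j: "j \<in> S" "0 < a j"
    using False a_nonneg by (metis order_le_less sum.neutral)
  have "0 < A"
    unfolding A_def using False a_nonneg sum_nonneg[of S a] by force
  have "b j \<le> B"
    unfolding B_def using \<open>finite S\<close> j(1) b_nonneg by (intro member_le_sum) auto
  with abs_cont j have "0 < B" by force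
  have "a i * ln (A / B) + a i - A / B * b i \<le> a i * ln (a i / b i)" if "i \<in> S" for i
  proof (cases "a i = 0")
    case True
    then show ?thesis using b_nonneg[OF that] \<open>0 < A\<close> \<open>0 < B\<close> by simp
  next
    case False
    then have "0 < a i" using a_nonneg[OF that] by simp
    with abs_cont[OF that] show ?thesis
      using \<open>0 < A\<close> \<open>0 < B\<close> by (intro mult_ln_div_lower_bound) simp_all
  qed
  then have "(\<Sum>i\<in>S. a i * ln (A / B) + a i - A / B * b i) \<le> (\<Sum>i\<in>S. a i * ln (a i / b i))"
    by (rule sum_mono)
  moreover have "(\<Sum>i\<in>S. a i * ln (A / B) + a i - A / B * b i) = A * ln (A / B)"
    unfolding A_def B_def using \<open>0 < B\<close>[unfolded B_def]
    by (simp add: sum.distrib sum_subtractf sum_distrib_left[symmetric]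
        sum_distrib_right[symmetric] sum_divide_distrib[symmetric])
  ultimately show ?thesis unfolding A_def B_def by simp
qed

lemma rel_entropy_marginal_le:
  fixes f :: "'a::finite \<Rightarrow> 'b::finite"
  assumes "\<And>u. 0 \<le> a u" "\<And>u. 0 \<le> b u" "\<And>u. 0 < a u \<Longrightarrow> 0 < b u"
  shows "rel_entropy (marginal f a) (marginal f b) \<le> rel_entropy a b"
proof -
  have "rel_entropy (marginal f a) (marginal f b)
      \<le> (\<Sum>v\<in>UNIV. \<Sum>u | f u = v. a u * ln (a u / b u))"
    unfolding rel_entropy_def marginal_def
    by (intro sum_mono log_sum_inequality) (simp_all add: assms)
  then show ?thesis
    unfolding rel_entropy_def sum_over_fibers .
qed

lemma mult_ln_div_eq:
  fixes a b c :: real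
  assumes "a = c * b"
  shows "a * ln (a / b) = a * ln c"
  using assms by (cases "a = 0") auto

lemma rel_entropy_marginal_eq:
  fixes f :: "'a::finite \<Rightarrow> 'b::finite"
  assumes ratio: "\<And>u. a u = g (f u) * b u"
  shows "rel_entropy (marginal f a) (marginal f b) = rel_entropy a b"
proof -
  have marginal_ratio: "marginal f a v = g v * marginal f b v" for v
    unfolding marginal_def sum_distrib_left by (intro sum.cong) (simp_all add: ratio)
  have "rel_entropy (marginal f a) (marginal f b) = (\<Sum>v\<in>UNIV. \<Sum>u | f u = v. a u * ln (g v))"
    unfolding rel_entropy_def mult_ln_div_eq[OF marginal_ratio]
    by (simp add: marginal_def sum_distrib_right)
  also have "\<dots> = (\<Sum>v\<in>UNIV. \<Sum>u | f u = v. a u * ln (g (f u)))"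
    by (intro sum.cong) auto
  also have "\<dots> = rel_entropy a b"
    unfolding rel_entropy_def sum_over_fibers mult_ln_div_eq[OF ratio] ..
  finally show ?thesis .
qed

lemma mutual_info_eq_rel_entropy:
  "mutual_info p W = rel_entropy (\<lambda>(u, v). p u * W u v) (\<lambda>(u, v). p u * out_dist p W v)"
proof -
  have "rel_entropy (\<lambda>(u, v). p u * W u v) (\<lambda>(u, v). p u * out_dist p W v)
      = (\<Sum>u\<in>UNIV. \<Sum>v\<in>UNIV. p u * W u v * ln (p u * W u v / (p u * out_dist p W v)))"
    unfolding rel_entropy_def by (simp add: sum.cartesian_product case_prod_unfold)
  also have "\<dots> = mutual_info p W"
    unfolding mutual_info_def by (intro sum.cong refl) auto
  finally show ?thesis ..
qed

lemma is_dist_nonneg: "is_dist p \<Longrightarrow> 0 \<le> p u"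
  unfolding is_dist_def by simp

lemma is_channel_nonneg: "is_channel W \<Longrightarrow> 0 \<le> W u v"
  unfolding is_channel_def is_dist_def by simp

lemma is_channel_sum: "is_channel W \<Longrightarrow> (\<Sum>v\<in>UNIV. W u v) = 1"
  unfolding is_channel_def is_dist_def by simp

lemma out_dist_comp_channel: "out_dist p (comp_channel P Q) = out_dist (out_dist p P) Q"
proof
  fix z
  have "out_dist p (comp_channel P Q) z = (\<Sum>x\<in>UNIV. \<Sum>y\<in>UNIV. p x * P x y * Q y z)"
    unfolding out_dist_def comp_channel_def by (simp add: sum_distrib_left mult.assoc)
  also have "\<dots> = (\<Sum>y\<in>UNIV. \<Sum>x\<in>UNIV. p x * P x y * Q y z)"
    by (rule sum.swap)
  also have "\<dots> = out_dist (out_dist p P) Q z"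
    unfolding out_dist_def by (simp add: sum_distrib_right)
  finally show "out_dist p (comp_channel P Q) z = out_dist (out_dist p P) Q z" .
qed

lemma mult_le_out_dist:
  assumes "\<And>u. 0 \<le> p u * W u v"
  shows "p u * W u v \<le> out_dist p W v"
  unfolding out_dist_def using assms by (intro member_le_sum) auto

definition chain_law ::
    "('x \<Rightarrow> real) \<Rightarrow> ('x \<Rightarrow> 'y \<Rightarrow> real) \<Rightarrow> ('y \<Rightarrow> 'z \<Rightarrow> real) \<Rightarrow> ('x \<times> 'y) \<times> 'z \<Rightarrow> real" where
  "chain_law p P Q = (\<lambda>((x, y), z). p x * P x y * Q y z)"

lemma chain_law_nonneg:
  "is_dist p \<Longrightarrow> is_channel P \<Longrightarrow> is_channel Q \<Longrightarrow> 0 \<le> chain_law p P Q u"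
  unfolding chain_law_def by (auto simp: is_dist_nonneg is_channel_nonneg split: prod.split)

lemma chain_law_le_out_dist:
  assumes "is_dist p" "is_channel P" "is_channel Q"
  shows "chain_law p P Q ((x, y), z) \<le> out_dist p (comp_channel P Q) z"
proof -
  have p_nonneg: "0 \<le> p x" and P_nonneg: "0 \<le> P x y" and Q_nonneg: "0 \<le> Q y z" for x y z
    using assms by (simp_all add: is_dist_nonneg is_channel_nonneg)
  have "P x y * Q y z \<le> comp_channel P Q x z"
    unfolding comp_channel_def out_dist_def[symmetric] using P_nonneg Q_nonneg
    by (intro mult_le_out_dist) simp
  then have "p x * (P x y * Q y z) \<le> p x * comp_channel P Q x z"
    using p_nonneg by (rule mult_left_mono)
  also have "\<dots> \<le> out_dist p (comp_channel P Q) z"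
    using p_nonneg P_nonneg Q_nonneg
    by (intro mult_le_out_dist) (simp add: comp_channel_def sum_nonneg)
  finally show ?thesis by (simp add: chain_law_def mult.assoc)
qed

lemma chain_law_pos_iff:
  assumes "is_dist p" "is_channel P" "is_channel Q"
  shows "0 < chain_law p P Q ((x, y), z) \<longleftrightarrow> 0 < p x \<and> 0 < P x y \<and> 0 < Q y z"
  using is_dist_nonneg[OF assms(1)] is_channel_nonneg[OF assms(2)] is_channel_nonneg[OF assms(3)]
  unfolding chain_law_def by (auto simp: less_le)

lemma mutual_info_comp_channel_le_rel_entropy:
  fixes p :: "'x::finite \<Rightarrow> real" and P :: "'x \<Rightarrow> 'y::finite \<Rightarrow> real"
    and Q :: "'y \<Rightarrow> 'z::finite \<Rightarrow> real" and b :: "('x \<times> 'y) \<times> 'z \<Rightarrow> real"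
  assumes channels: "is_dist p" "is_channel P" "is_channel Q"
    and b_nonneg: "\<And>u. 0 \<le> b u"
    and abs_cont: "\<And>u. 0 < chain_law p P Q u \<Longrightarrow> 0 < b u"
    and b_marginal: "\<And>x z. (\<Sum>y\<in>UNIV. b ((x, y), z)) = p x * out_dist p (comp_channel P Q) z"
  shows "mutual_info p (comp_channel P Q) \<le> rel_entropy (chain_law p P Q) b"
proof -
  let ?xz = "\<lambda>((x, y), z). (x, z)"
  have "marginal ?xz (chain_law p P Q) = (\<lambda>(x, z). p x * comp_channel P Q x z)"
    by (auto simp: marginal_forget_middle chain_law_def comp_channel_def sum_distrib_left mult.assoc)
  moreover have "marginal ?xz b = (\<lambda>(x, z). p x * out_dist p (comp_channel P Q) z)"
    by (auto simp: marginal_forget_middle b_marginal)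
  ultimately have "mutual_info p (comp_channel P Q)
      = rel_entropy (marginal ?xz (chain_law p P Q)) (marginal ?xz b)"
    by (simp add: mutual_info_eq_rel_entropy)
  also have "\<dots> \<le> rel_entropy (chain_law p P Q) b"
    using chain_law_nonneg[OF channels] b_nonneg abs_cont by (rule rel_entropy_marginal_le)
  finally show ?thesis .
qed

lemma rel_entropy_chain_law_fst:
  fixes p :: "'x::finite \<Rightarrow> real" and P :: "'x \<Rightarrow> 'y::finite \<Rightarrow> real"
    and Q :: "'y \<Rightarrow> 'z::finite \<Rightarrow> real"
  assumes channels: "is_dist p" "is_channel P" "is_channel Q"
  shows "rel_entropy (chain_law p P Q) (\<lambda>((x, y), z). p x * out_dist p P y * Q y z)
    = mutual_info p P"
proof -
  define q where "q = out_dist p P"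
  define b where "b = (\<lambda>((x, y), z). p x * q y * Q y z)"
  have ratio: "chain_law p P Q u = (\<lambda>(x, y). P x y / q y) (fst u) * b u" for u
  proof -
    obtain x y z where u: "u = ((x, y), z)" by (metis prod.collapse)
    have "p x * P x y * Q y z = P x y / q y * (p x * q y * Q y z)"
    proof (cases "q y = 0")
      case True
      have "0 \<le> p x * P x y" "p x * P x y \<le> q y"
        using channels unfolding q_def
        by (simp_all add: is_dist_nonneg is_channel_nonneg mult_le_out_dist)
      with True show ?thesis by simp
    qed simp
    then show ?thesis
      unfolding u chain_law_def b_def by simp
  qed
  have "marginal fst (chain_law p P Q) = (\<lambda>(x, y). p x * P x y)"
    using is_channel_sum[OF channels(3)]
    by (auto simp: marginal_fst chain_law_def sum_distrib_left[symmetric])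
  moreover have "marginal fst b = (\<lambda>(x, y). p x * q y)"
    using is_channel_sum[OF channels(3)]
    by (auto simp: marginal_fst b_def sum_distrib_left[symmetric])
  moreover have "rel_entropy (marginal fst (chain_law p P Q)) (marginal fst b)
      = rel_entropy (chain_law p P Q) b"
    by (rule rel_entropy_marginal_eq) (rule ratio)
  ultimately show ?thesis
    by (simp add: mutual_info_eq_rel_entropy b_def q_def)
qed

lemma rel_entropy_chain_law_snd:
  fixes p :: "'x::finite \<Rightarrow> real" and P :: "'x \<Rightarrow> 'y::finite \<Rightarrow> real"
    and Q :: "'y \<Rightarrow> 'z::finite \<Rightarrow> real"
  assumes channels: "is_dist p" "is_channel P" "is_channel Q"
  shows "rel_entropy (chain_law p P Q)
      (\<lambda>((x, y), z). p x * P x y * out_dist p (comp_channel P Q) z)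
    = mutual_info (out_dist p P) Q"
proof -
  define q where "q = out_dist p P"
  define r where "r = out_dist p (comp_channel P Q)"
  define b where "b = (\<lambda>((x, y), z). p x * P x y * r z)"
  let ?yz = "\<lambda>((x, y), z). (y, z)"
  have ratio: "chain_law p P Q u = (\<lambda>(y, z). Q y z / r z) (?yz u) * b u" for u
  proof -
    obtain x y z where u: "u = ((x, y), z)" by (metis prod.collapse)
    have "chain_law p P Q u = Q y z / r z * (p x * P x y * r z)"
    proof (cases "r z = 0")
      case True
      moreover have "0 \<le> chain_law p P Q u" "chain_law p P Q u \<le> r z"
        unfolding u r_def using chain_law_nonneg chain_law_le_out_dist channels by auto
      ultimately show ?thesis by simp
    qed (simp add: u chain_law_def)
    then show ?thesis
      unfolding u b_def by simp
  qed
  have "marginal ?yz (chain_law p P Q) = (\<lambda>(y, z). q y * Q y z)"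
    by (auto simp: marginal_forget_first chain_law_def q_def out_dist_def sum_distrib_right)
  moreover have "marginal ?yz b = (\<lambda>(y, z). q y * out_dist q Q z)"
    by (auto simp: marginal_forget_first b_def r_def q_def out_dist_comp_channel
        out_dist_def[of p] sum_distrib_right)
  moreover have "rel_entropy (marginal ?yz (chain_law p P Q)) (marginal ?yz b)
      = rel_entropy (chain_law p P Q) b"
    by (rule rel_entropy_marginal_eq) (rule ratio)
  ultimately show ?thesis
    by (simp add: mutual_info_eq_rel_entropy b_def q_def r_def)
qed

lemma mutual_info_comp_channel_le_fst:
  fixes p :: "'x::finite \<Rightarrow> real" and P :: "'x \<Rightarrow> 'y::finite \<Rightarrow> real"
    and Q :: "'y \<Rightarrow> 'z::finite \<Rightarrow> real"
  assumes channels: "is_dist p" "is_channel P" "is_channel Q"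
  shows "mutual_info p (comp_channel P Q) \<le> mutual_info p P"
proof -
  define q where "q = out_dist p P"
  have p_nonneg: "0 \<le> p x" and P_nonneg: "0 \<le> P x y" and Q_nonneg: "0 \<le> Q y z" for x y z
    using channels by (simp_all add: is_dist_nonneg is_channel_nonneg)
  have pP_le_q: "p x * P x y \<le> q y" for x y
    unfolding q_def using p_nonneg P_nonneg by (intro mult_le_out_dist) simp
  have "mutual_info p (comp_channel P Q)
      \<le> rel_entropy (chain_law p P Q) (\<lambda>((x, y), z). p x * q y * Q y z)"
  proof (rule mutual_info_comp_channel_le_rel_entropy[OF channels])
    show "0 \<le> (\<lambda>((x, y), z). p x * q y * Q y z) u" for u
      using p_nonneg Q_nonneg order_trans[OF mult_nonneg_nonneg[OF p_nonneg P_nonneg] pP_le_q]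
      by (auto split: prod.split)
    show "0 < (\<lambda>((x, y), z). p x * q y * Q y z) u" if "0 < chain_law p P Q u" for u
    proof -
      obtain x y z where u: "u = ((x, y), z)" by (metis prod.collapse)
      with that have "0 < p x" "0 < P x y" "0 < Q y z"
        using chain_law_pos_iff[OF channels] by auto
      moreover from this have "0 < q y"
        using pP_le_q[of x y] by (meson less_le_trans mult_pos_pos)
      ultimately show ?thesis
        unfolding u by simp
    qed
    show "(\<Sum>y\<in>UNIV. (\<lambda>((x, y), z). p x * q y * Q y z) ((x, y), z))
        = p x * out_dist p (comp_channel P Q) z" for x z
      unfolding out_dist_comp_channel q_def[symmetric]
      by (simp add: out_dist_def sum_distrib_left mult.assoc)
  qed
  also have "\<dots> = mutual_info p P"
    unfolding q_def using channels by (rule rel_entropy_chain_law_fst)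
  finally show ?thesis .
qed

lemma mutual_info_comp_channel_le_snd:
  fixes p :: "'x::finite \<Rightarrow> real" and P :: "'x \<Rightarrow> 'y::finite \<Rightarrow> real"
    and Q :: "'y \<Rightarrow> 'z::finite \<Rightarrow> real"
  assumes channels: "is_dist p" "is_channel P" "is_channel Q"
  shows "mutual_info p (comp_channel P Q) \<le> mutual_info (out_dist p P) Q"
proof -
  define r where "r = out_dist p (comp_channel P Q)"
  have p_nonneg: "0 \<le> p x" and P_nonneg: "0 \<le> P x y" for x y
    using channels by (simp_all add: is_dist_nonneg is_channel_nonneg)
  have law_le_r: "chain_law p P Q ((x, y), z) \<le> r z" for x y z
    unfolding r_def using channels by (rule chain_law_le_out_dist)
  have "mutual_info p (comp_channel P Q)
      \<le> rel_entropy (chain_law p P Q) (\<lambda>((x, y), z). p x * P x y * r z)"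
  proof (rule mutual_info_comp_channel_le_rel_entropy[OF channels])
    show "0 \<le> (\<lambda>((x, y), z). p x * P x y * r z) u" for u
      using p_nonneg P_nonneg order_trans[OF chain_law_nonneg[OF channels] law_le_r]
      by (auto split: prod.split)
    show "0 < (\<lambda>((x, y), z). p x * P x y * r z) u" if "0 < chain_law p P Q u" for u
    proof -
      obtain x y z where u: "u = ((x, y), z)" by (metis prod.collapse)
      with that have "0 < p x" "0 < P x y"
        using chain_law_pos_iff[OF channels] by auto
      moreover have "0 < r z"
        using that law_le_r[of x y z] unfolding u by linarith
      ultimately show ?thesis
        unfolding u by simp
    qed
    show "(\<Sum>y\<in>UNIV. (\<lambda>((x, y), z). p x * P x y * r z) ((x, y), z))
        = p x * out_dist p (comp_channel P Q) z" for x z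
      using is_channel_sum[OF channels(2)]
      unfolding r_def[symmetric]
      by (simp add: sum_distrib_right[symmetric] sum_distrib_left[symmetric])
  qed
  also have "\<dots> = mutual_info (out_dist p P) Q"
    unfolding r_def using channels by (rule rel_entropy_chain_law_snd)
  finally show ?thesis .
qed

theorem theorem9:
  fixes p :: "'t \<Rightarrow> 'x::finite \<Rightarrow> real"
    and P :: "'l \<Rightarrow> 'x \<Rightarrow> 'y::finite \<Rightarrow> real"
    and Q :: "'m \<Rightarrow> 'y \<Rightarrow> 'z::finite \<Rightarrow> real"
    and Th :: "'t set" and La :: "'l set" and M :: "'m set"
  assumes "Th \<noteq> {}" and "La \<noteq> {}" and "M \<noteq> {}"
    and "\<forall>t\<in>Th. is_dist (p t)"
    and "\<forall>l\<in>La. is_channel (P l)"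
    and "\<forall>m\<in>M. is_channel (Q m)"
  shows "(SUP (t, l, m) \<in> Th \<times> La \<times> M.
            ereal (mutual_info (p t) (comp_channel (P l) (Q m))))
         \<le> min (SUP (t, l) \<in> Th \<times> La. ereal (mutual_info (p t) (P l)))
                 (SUP (t, l, m) \<in> Th \<times> La \<times> M.
                    ereal (mutual_info (out_dist (p t) (P l)) (Q m)))"
proof (rule SUP_least, clarify)
  fix t l m
  assume "t \<in> Th" "l \<in> La" "m \<in> M"
  then have channels: "is_dist (p t)" "is_channel (P l)" "is_channel (Q m)"
    using assms by auto
  have "ereal (mutual_info (p t) (comp_channel (P l) (Q m)))
      \<le> (SUP (t, l) \<in> Th \<times> La. ereal (mutual_info (p t) (P l)))"
    using \<open>t \<in> Th\<close> \<open>l \<in> La\<close> mutual_info_comp_channel_le_fst[OF channels]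
    by (intro SUP_upper2[of "(t, l)"]) auto
  moreover have "ereal (mutual_info (p t) (comp_channel (P l) (Q m)))
      \<le> (SUP (t, l, m) \<in> Th \<times> La \<times> M. ereal (mutual_info (out_dist (p t) (P l)) (Q m)))"
    using \<open>t \<in> Th\<close> \<open>l \<in> La\<close> \<open>m \<in> M\<close> mutual_info_comp_channel_le_snd[OF channels]
    by (intro SUP_upper2[of "(t, l, m)"]) auto
  ultimately show "ereal (mutual_info (p t) (comp_channel (P l) (Q m)))
      \<le> min (SUP (t, l) \<in> Th \<times> La. ereal (mutual_info (p t) (P l)))
             (SUP (t, l, m) \<in> Th \<times> La \<times> M. ereal (mutual_info (out_dist (p t) (P l)) (Q m)))"
    by simp
qed

end
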